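(* There exists a Moufang loop $M$ of order $3^{19}$ generated by four elements $a,b,c,d$ such that $(a,b,c)=(a,b,d)=(a,c,d)=(b,c,d)=1$ (so any three elements of the generating set $\{a,b,c,d\}$ associate, in every order and with repetitions allowed), but $([a,b],c,d)\neq 1$. In particular, $M$ is a nonassociative Moufang loop possessing a generating set every three elements of which associate.
   Context: A Moufang loop is a loop satisfying the identity $(xy)(zx)=(x(yz))x$. For elements $x,y,z$ of a Moufang loop, $[x,y]$ denotes the unique element $c$ with $xy=(yx)c$, and $(x,y,z)$ denotes the unique element $u$ with $(xy)z=(x(yz))u$. Elements $x,y,z$ are said to associate if $(x,y,z)=1$. *)

theory Defs
  imports Main
begin

definition loop :: "'a set \<Rightarrow> ('a \<Rightarrow> 'a \<Rightarrow> 'a) \<Rightarrow> 'a \<Rightarrow> bool" where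
  "loop M mult e \<longleftrightarrow>
     (\<forall>x\<in>M. \<forall>y\<in>M. mult x y \<in> M) \<and>
     e \<in> M \<and> (\<forall>x\<in>M. mult e x = x \<and> mult x e = x) \<and>
     (\<forall>a\<in>M. \<forall>b\<in>M. \<exists>!x. x \<in> M \<and> mult a x = b) \<and>
     (\<forall>a\<in>M. \<forall>b\<in>M. \<exists>!y. y \<in> M \<and> mult y a = b)"

definition moufang_loop :: "'a set \<Rightarrow> ('a \<Rightarrow> 'a \<Rightarrow> 'a) \<Rightarrow> 'a \<Rightarrow> bool" where
  "moufang_loop M mult e \<longleftrightarrow> loop M mult e \<and>
     (\<forall>x\<in>M. \<forall>y\<in>M. \<forall>z\<in>M.
        mult (mult x y) (mult z x) = mult (mult x (mult y z)) x)"

definition loop_comm :: "'a set \<Rightarrow> ('a \<Rightarrow> 'a \<Rightarrow> 'a) \<Rightarrow> 'a \<Rightarrow> 'a \<Rightarrow> 'a" where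
  "loop_comm M mult x y = (THE c. c \<in> M \<and> mult x y = mult (mult y x) c)"

definition loop_assoc :: "'a set \<Rightarrow> ('a \<Rightarrow> 'a \<Rightarrow> 'a) \<Rightarrow> 'a \<Rightarrow> 'a \<Rightarrow> 'a \<Rightarrow> 'a" where
  "loop_assoc M mult x y z = (THE u. u \<in> M \<and> mult (mult x y) z = mult (mult x (mult y z)) u)"

inductive_set subloop_gen :: "'a set \<Rightarrow> ('a \<Rightarrow> 'a \<Rightarrow> 'a) \<Rightarrow> 'a set \<Rightarrow> 'a set"
  for M mult S where
  gen: "x \<in> S \<Longrightarrow> x \<in> subloop_gen M mult S"
| mul: "x \<in> subloop_gen M mult S \<Longrightarrow> y \<in> subloop_gen M mult S \<Longrightarrow> mult x y \<in> subloop_gen M mult S"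
| ldiv: "x \<in> subloop_gen M mult S \<Longrightarrow> y \<in> subloop_gen M mult S \<Longrightarrow> z \<in> M \<Longrightarrow> mult x z = y
          \<Longrightarrow> z \<in> subloop_gen M mult S"
| rdiv: "x \<in> subloop_gen M mult S \<Longrightarrow> y \<in> subloop_gen M mult S \<Longrightarrow> z \<in> M \<Longrightarrow> mult z x = y
          \<Longrightarrow> z \<in> subloop_gen M mult S"

end

theory Submission
  imports Defs "HOL-Library.Numeral_Type" "HOL-Library.Product_Plus"
    "HOL-Computational_Algebra.Group_Closure"
begin

text \<open>
  The loop is an iterated central extension. On \<open>A = (\<int>/27)^4\<close> with basis \<open>a, b, c, d\<close>,
  the biadditive cocycle \<open>\<beta>(x, y) = (x_i y_j mod 3)_{i<j}\<close> defines a class-two nilpotent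
  group \<open>G = A \<times>_\<beta> (\<int>/3)^6\<close>, whose central factor \<open>(\<int>/3)^6\<close> is spanned by the
  commutators of basis vectors. Any \<open>F : G \<times> G \<rightarrow> \<int>/3\<close> satisfying the Moufang cocycle identity
  \<open>F(x,y) + F(z,x) + F(xy,zx) = F(y,z) + F(x,yz) + F(x(yz),x)\<close> turns \<open>M = G \<times>_F \<int>/3\<close> into a
  Moufang loop, of order \<open>27^4 \<cdot> 3^6 \<cdot> 3 = 3^19\<close>. For the polynomial \<open>F\<close> below, any three
  generators associate, while \<open>([a,b], c, d)\<close> generates the central factor \<open>\<int>/3\<close> of \<open>M\<close>.

  Generation goes layer by layer: a subloop of a central extension that meets every fibre
  and contains the central factor is everything, and the central factors of \<open>G\<close> and \<open>M\<close>
  are reached by commutators and by that associator respectively.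
\<close>

section \<open>Associators, commutators and generated subloops\<close>

lemma loop_mult_closed:
  assumes "loop M m e" "x \<in> M" "y \<in> M"
  shows "m x y \<in> M"
  using assms by (simp add: loop_def)

lemma loop_ldiv_ex1:
  assumes "loop M m e" "a \<in> M" "b \<in> M"
  shows "\<exists>!x. x \<in> M \<and> m a x = b"
  using assms by (simp add: loop_def)

lemma loop_rdiv_ex1:
  assumes "loop M m e" "a \<in> M" "b \<in> M"
  shows "\<exists>!x. x \<in> M \<and> m x a = b"
  using assms by (simp add: loop_def)

lemma loop_ldiv_unique:
  assumes "loop M m e" "a \<in> M" "x \<in> M" "y \<in> M" "m a x = m a y"
  shows "x = y"
proof -
  have "\<exists>!x. x \<in> M \<and> m a x = m a y"
    using assms(1,2,4) by (simp add: loop_ldiv_ex1 loop_mult_closed)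
  then show ?thesis
    using assms(3,4,5) by (auto elim: ex1E)
qed

lemma loop_rdiv_unique:
  assumes "loop M m e" "a \<in> M" "x \<in> M" "y \<in> M" "m x a = m y a"
  shows "x = y"
proof -
  have "\<exists>!x. x \<in> M \<and> m x a = m y a"
    using assms(1,2,4) by (simp add: loop_rdiv_ex1 loop_mult_closed)
  then show ?thesis
    using assms(3,4,5) by (auto elim: ex1E)
qed

lemma loop_assoc_eqI:
  assumes "loop M m e" "x \<in> M" "y \<in> M" "z \<in> M" "u \<in> M"
    and "m (m x y) z = m (m x (m y z)) u"
  shows "loop_assoc M m x y z = u"
  unfolding loop_assoc_def
proof (rule the_equality)
  fix v assume v: "v \<in> M \<and> m (m x y) z = m (m x (m y z)) v"
  have "m x (m y z) \<in> M"
    using assms(1-4) by (simp add: loop_mult_closed)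
  then show "v = u"
    using loop_ldiv_unique[OF assms(1)] v assms(5,6) by metis
qed (use assms in auto)

lemma loop_comm_eqI:
  assumes "loop M m e" "x \<in> M" "y \<in> M" "c \<in> M" and "m x y = m (m y x) c"
  shows "loop_comm M m x y = c"
  unfolding loop_comm_def
proof (rule the_equality)
  fix v assume v: "v \<in> M \<and> m x y = m (m y x) v"
  have "m y x \<in> M"
    using assms(1-3) by (simp add: loop_mult_closed)
  then show "v = c"
    using loop_ldiv_unique[OF assms(1)] v assms(4,5) by metis
qed (use assms in auto)

lemma comm_in_subloop_gen:
  assumes "x \<in> subloop_gen M m S" "y \<in> subloop_gen M m S" "c \<in> M"
    and "m x y = m (m y x) c"
  shows "c \<in> subloop_gen M m S"
proof -
  have "m y x \<in> subloop_gen M m S" "m x y \<in> subloop_gen M m S"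
    using assms(1,2) by (auto intro: subloop_gen.mul)
  with assms(3,4) show ?thesis
    by (metis subloop_gen.ldiv)
qed

lemma assoc_in_subloop_gen:
  assumes "x \<in> subloop_gen M m S" "y \<in> subloop_gen M m S" "z \<in> subloop_gen M m S" "u \<in> M"
    and "m (m x y) z = m (m x (m y z)) u"
  shows "u \<in> subloop_gen M m S"
proof -
  have "m x (m y z) \<in> subloop_gen M m S" "m (m x y) z \<in> subloop_gen M m S"
    using assms(1-3) by (auto intro: subloop_gen.mul)
  with assms(4,5) show ?thesis
    by (metis subloop_gen.ldiv)
qed

lemma unit_in_subloop_gen:
  assumes "loop M m e" "x \<in> subloop_gen M m S" "x \<in> M"
  shows "e \<in> subloop_gen M m S"
  by (rule subloop_gen.ldiv[where x=x and y=x]) (use assms in \<open>auto simp: loop_def\<close>)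

lemma subloop_gen_hom_image:
  assumes "loop UNIV m e" "loop UNIV m' e'" and hom: "\<And>x y. \<phi> (m x y) = m' (\<phi> x) (\<phi> y)"
  shows "subloop_gen UNIV m' (\<phi> ` S) \<subseteq> \<phi> ` subloop_gen UNIV m S"
proof
  fix u assume "u \<in> subloop_gen UNIV m' (\<phi> ` S)"
  then show "u \<in> \<phi> ` subloop_gen UNIV m S"
  proof induction
    case (gen x)
    then show ?case by (auto intro: subloop_gen.gen)
  next
    case (mul x y)
    then show ?case by (auto simp flip: hom intro: subloop_gen.mul)
  next
    case (ldiv x y z)
    then obtain x' y' where L: "x' \<in> subloop_gen UNIV m S" "y' \<in> subloop_gen UNIV m S"
      and xy: "x = \<phi> x'" "y = \<phi> y'" by blast
    obtain z' where z': "m x' z' = y'"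
      using assms(1) unfolding loop_def by (meson UNIV_I ex1_implies_ex)
    then have "m' x (\<phi> z') = m' x z"
      using ldiv.hyps xy by (simp flip: hom)
    then have "z = \<phi> z'"
      using loop_ldiv_unique[OF assms(2)] by blast
    moreover have "z' \<in> subloop_gen UNIV m S"
      using L z' by (auto intro: subloop_gen.ldiv[where x=x' and y=y'])
    ultimately show ?case by blast
  next
    case (rdiv x y z)
    then obtain x' y' where L: "x' \<in> subloop_gen UNIV m S" "y' \<in> subloop_gen UNIV m S"
      and xy: "x = \<phi> x'" "y = \<phi> y'" by blast
    obtain z' where z': "m z' x' = y'"
      using assms(1) unfolding loop_def by (meson UNIV_I ex1_implies_ex)
    then have "m' (\<phi> z') x = m' z x"
      using rdiv.hyps xy by (simp flip: hom)
    then have "z = \<phi> z'"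
      using loop_rdiv_unique[OF assms(2)] by blast
    moreover have "z' \<in> subloop_gen UNIV m S"
      using L z' by (auto intro: subloop_gen.rdiv[where x=x' and y=y'])
    ultimately show ?case by blast
  qed
qed

lemma loop_assoc_spec:
  assumes "loop M m e" "x \<in> M" "y \<in> M" "z \<in> M"
  shows "loop_assoc M m x y z \<in> M \<and> m (m x y) z = m (m x (m y z)) (loop_assoc M m x y z)"
proof -
  have "m (m x y) z \<in> M" "m x (m y z) \<in> M"
    using assms by (simp_all add: loop_mult_closed)
  then obtain u where u: "u \<in> M" "m (m x (m y z)) u = m (m x y) z"
    using loop_ldiv_ex1[OF assms(1)] by blast
  then have "loop_assoc M m x y z = u"
    by (intro loop_assoc_eqI[OF assms]) simp_all
  with u show ?thesis by simp
qed

lemma loop_comm_spec: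
  assumes "loop M m e" "x \<in> M" "y \<in> M"
  shows "loop_comm M m x y \<in> M \<and> m x y = m (m y x) (loop_comm M m x y)"
proof -
  have "m x y \<in> M" "m y x \<in> M"
    using assms by (simp_all add: loop_mult_closed)
  then obtain c where c: "c \<in> M" "m (m y x) c = m x y"
    using loop_ldiv_ex1[OF assms(1)] by blast
  then have "loop_comm M m x y = c"
    by (intro loop_comm_eqI[OF assms]) simp_all
  with c show ?thesis by simp
qed

section \<open>Transport along an injection\<close>

definition transport_mult :: "('a \<Rightarrow> 'b) \<Rightarrow> ('a \<Rightarrow> 'a \<Rightarrow> 'a) \<Rightarrow> 'b \<Rightarrow> 'b \<Rightarrow> 'b"
  where "transport_mult h m x y = h (m (inv h x) (inv h y))"

lemma transport_mult_image [simp]: "inj h \<Longrightarrow> transport_mult h m (h x) (h y) = h (m x y)"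
  by (simp add: transport_mult_def)

lemma loop_transport:
  assumes "inj h" "loop UNIV m e"
  shows "loop (range h) (transport_mult h m) (h e)"
proof -
  have unit: "m e x = x" "m x e = x" for x
    using assms(2) by (simp_all add: loop_def)
  show ?thesis
    unfolding loop_def
  proof (intro conjI ballI)
    fix a b assume "a \<in> range h" "b \<in> range h"
    then obtain x y where ab: "a = h x" "b = h y" by blast
    obtain z where z: "m x z = y" and z_unique: "\<And>z'. m x z' = y \<Longrightarrow> z' = z"
      using loop_ldiv_ex1[OF assms(2)] by (metis UNIV_I)
    obtain w where w: "m w x = y" and w_unique: "\<And>w'. m w' x = y \<Longrightarrow> w' = w"
      using loop_rdiv_ex1[OF assms(2)] by (metis UNIV_I)
    show "\<exists>!c. c \<in> range h \<and> transport_mult h m a c = b"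
    proof (rule ex1I[of _ "h z"])
      fix c assume "c \<in> range h \<and> transport_mult h m a c = b"
      then obtain z' where "c = h z'" "h (m x z') = h y" using ab assms(1) by auto
      then show "c = h z" using z_unique assms(1) by (simp add: inj_eq)
    qed (simp add: ab z assms(1))
    show "\<exists>!c. c \<in> range h \<and> transport_mult h m c a = b"
    proof (rule ex1I[of _ "h w"])
      fix c assume "c \<in> range h \<and> transport_mult h m c a = b"
      then obtain w' where "c = h w'" "h (m w' x) = h y" using ab assms(1) by auto
      then show "c = h w" using w_unique assms(1) by (simp add: inj_eq)
    qed (simp add: ab w assms(1))
  qed (use assms(1) unit in \<open>auto simp: transport_mult_def\<close>)
qed

lemma moufang_loop_transport:
  assumes "inj h" "moufang_loop UNIV m e"
  shows "moufang_loop (range h) (transport_mult h m) (h e)"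
  using assms loop_transport[OF assms(1)] by (auto simp: moufang_loop_def)

lemma subloop_gen_transport:
  assumes "inj h" "subloop_gen UNIV m S = UNIV"
  shows "subloop_gen (range h) (transport_mult h m) (h ` S) = range h"
proof
  show "subloop_gen (range h) (transport_mult h m) (h ` S) \<subseteq> range h"
  proof
    fix x assume "x \<in> subloop_gen (range h) (transport_mult h m) (h ` S)"
    then show "x \<in> range h"
      by induction (auto simp: transport_mult_def)
  qed
  have "h x \<in> subloop_gen (range h) (transport_mult h m) (h ` S)"
    if "x \<in> subloop_gen UNIV m S" for x
    using that
  proof induction
    case (gen x)
    then show ?case by (simp add: subloop_gen.gen)
  next
    case (mul x y)
    then show ?case using subloop_gen.mul[OF mul.IH] assms(1) by simp
  next
    case (ldiv x y z)
    then show ?case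
      using subloop_gen.ldiv[OF ldiv.IH, of "h z"] assms(1) by simp
  next
    case (rdiv x y z)
    then show ?case
      using subloop_gen.rdiv[OF rdiv.IH, of "h z"] assms(1) by simp
  qed
  then show "range h \<subseteq> subloop_gen (range h) (transport_mult h m) (h ` S)"
    using assms(2) by blast
qed

lemma loop_assoc_transport:
  assumes "inj h" "loop UNIV m e"
  shows "loop_assoc (range h) (transport_mult h m) (h x) (h y) (h z) = h (loop_assoc UNIV m x y z)"
  using loop_assoc_spec[OF assms(2), of x y z] assms
  by (intro loop_assoc_eqI[OF loop_transport]) auto

lemma loop_comm_transport:
  assumes "inj h" "loop UNIV m e"
  shows "loop_comm (range h) (transport_mult h m) (h x) (h y) = h (loop_comm UNIV m x y)"
  using loop_comm_spec[OF assms(2), of x y] assms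
  by (intro loop_comm_eqI[OF loop_transport]) auto

section \<open>Central extensions\<close>

definition ext_mult :: "('g \<Rightarrow> 'g \<Rightarrow> 'g) \<Rightarrow> ('g \<Rightarrow> 'g \<Rightarrow> 'z::ab_group_add) \<Rightarrow> 'g \<times> 'z \<Rightarrow> 'g \<times> 'z \<Rightarrow> 'g \<times> 'z"
  where "ext_mult m f p q = (m (fst p) (fst q), snd p + snd q + f (fst p) (fst q))"

lemma ext_mult_Pair [simp]: "ext_mult m f (x, a) (y, b) = (m x y, a + b + f x y)"
  by (simp add: ext_mult_def)

definition moufang_cocycle :: "('g \<Rightarrow> 'g \<Rightarrow> 'g) \<Rightarrow> ('g \<Rightarrow> 'g \<Rightarrow> 'z::ab_group_add) \<Rightarrow> bool"
  where "moufang_cocycle m f \<longleftrightarrow> (\<forall>x y z.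
    f x y + f z x + f (m x y) (m z x) = f y z + f x (m y z) + f (m x (m y z)) x)"

locale central_extension =
  fixes m :: "'g \<Rightarrow> 'g \<Rightarrow> 'g" and e :: 'g and f :: "'g \<Rightarrow> 'g \<Rightarrow> 'z::ab_group_add"
  assumes base_loop: "loop UNIV m e"
    and cocycle_unit_left [simp]: "f e x = 0"
    and cocycle_unit_right [simp]: "f x e = 0"
begin

abbreviation mult :: "'g \<times> 'z \<Rightarrow> 'g \<times> 'z \<Rightarrow> 'g \<times> 'z"
  where "mult \<equiv> ext_mult m f"

lemma base_unit [simp]: "m e x = x" "m x e = x"
  using base_loop by (simp_all add: loop_def)

lemma base_ldiv: "\<exists>!z. m x z = y"
  using base_loop by (simp add: loop_def)

lemma base_rdiv: "\<exists>!z. m z x = y"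
  using base_loop by (simp add: loop_def)

lemma loop_ext: "loop UNIV mult (e, 0)"
  unfolding loop_def
proof (intro conjI ballI)
  fix p q :: "'g \<times> 'z"
  obtain x a y b where pq: "p = (x, a)" "q = (y, b)" by fastforce
  obtain z where z: "m x z = y" and z_unique: "\<And>z'. m x z' = y \<Longrightarrow> z' = z"
    using base_ldiv by blast
  show "\<exists>!r. r \<in> UNIV \<and> mult p r = q"
  proof (rule ex1I[of _ "(z, b - a - f x z)"])
    fix r assume "r \<in> UNIV \<and> mult p r = q"
    then show "r = (z, b - a - f x z)"
      using z_unique pq by (cases r) (auto simp: algebra_simps)
  qed (simp add: pq z)
  obtain w where w: "m w x = y" and w_unique: "\<And>w'. m w' x = y \<Longrightarrow> w' = w"
    using base_rdiv by blast
  show "\<exists>!r. r \<in> UNIV \<and> mult r p = q"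
  proof (rule ex1I[of _ "(w, b - a - f w x)"])
    fix r assume "r \<in> UNIV \<and> mult r p = q"
    then show "r = (w, b - a - f w x)"
      using w_unique pq by (cases r) (auto simp: algebra_simps)
  qed (simp add: pq w)
qed (auto simp: ext_mult_def)

lemma moufang_loop_ext:
  assumes "moufang_loop UNIV m e" and "moufang_cocycle m f"
  shows "moufang_loop UNIV mult (e, 0)"
  unfolding moufang_loop_def
proof (intro conjI ballI loop_ext)
  fix p q r :: "'g \<times> 'z"
  have "m (m x y) (m z x) = m (m x (m y z)) x" for x y z
    using assms(1) by (simp add: moufang_loop_def)
  moreover have "f x y + f z x + f (m x y) (m z x) = f y z + f x (m y z) + f (m x (m y z)) x"
    for x y z
    using assms(2) by (simp add: moufang_cocycle_def)
  ultimately show "mult (mult p q) (mult r p) = mult (mult p (mult q r)) p"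
    by (simp add: ext_mult_def algebra_simps)
qed

lemma fst_mult: "fst (mult p q) = m (fst p) (fst q)"
  by (simp add: ext_mult_def)

lemma center_in_subloop_gen:
  assumes "\<forall>t\<in>T. (e, t) \<in> subloop_gen UNIV mult S" and "S \<noteq> {}" and "z \<in> group_closure T"
  shows "(e, z) \<in> subloop_gen UNIV mult S"
  using assms(3)
proof induction
  case (base s)
  obtain x where "x \<in> S" using assms(2) by blast
  then have "x \<in> subloop_gen UNIV mult S"
    by (rule subloop_gen.gen)
  then have "(e, 0) \<in> subloop_gen UNIV mult S"
    by (rule unit_in_subloop_gen[OF loop_ext]) simp
  then show ?case using base assms(1) by auto
next
  case (diff s t)
  have "mult (e, t) (e, s - t) = (e, s)" by simp
  then show ?case
    by (rule subloop_gen.ldiv[where x="(e, t)" and y="(e, s)", rotated 3]) (use diff.IH in simp_all)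
qed

lemma subloop_gen_eq_UNIV:
  assumes gen_base: "subloop_gen UNIV m (fst ` S) = UNIV"
    and gen_center: "group_closure T = UNIV" "\<forall>t\<in>T. (e, t) \<in> subloop_gen UNIV mult S"
  shows "subloop_gen UNIV mult S = UNIV"
proof -
  have "S \<noteq> {}"
  proof
    assume "S = {}"
    then have "e \<in> subloop_gen UNIV m {}" using gen_base by simp
    then show False by induction simp_all
  qed
  have lift: "\<exists>b. (x, b) \<in> subloop_gen UNIV mult S" for x
  proof -
    have "x \<in> fst ` subloop_gen UNIV mult S"
      using subloop_gen_hom_image[where \<phi>=fst and S=S, OF loop_ext base_loop fst_mult] gen_base by blast
    then obtain p where "p \<in> subloop_gen UNIV mult S" "x = fst p" by blast
    then show ?thesis by (intro exI[of _ "snd p"]) simp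
  qed
  have "(x, a) \<in> subloop_gen UNIV mult S" for x a
  proof -
    obtain b where b: "(x, b) \<in> subloop_gen UNIV mult S" using lift by blast
    have "(e, a - b) \<in> subloop_gen UNIV mult S"
      using center_in_subloop_gen[OF gen_center(2) \<open>S \<noteq> {}\<close>, of "a - b"] gen_center(1)
      by simp
    with b have "mult (x, b) (e, a - b) \<in> subloop_gen UNIV mult S"
      by (rule subloop_gen.mul)
    then show ?thesis by simp
  qed
  then show ?thesis by (metis UNIV_eq_I prod.collapse)
qed

end

section \<open>Additive groups\<close>

lemma loop_add: "loop UNIV (+) (0::'a::group_add)"
  unfolding loop_def
proof (intro conjI ballI)
  fix a b :: 'a
  show "\<exists>!x. x \<in> UNIV \<and> a + x = b"
    by (rule ex1I[of _ "- a + b"]) (auto simp: add.assoc[symmetric])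
  show "\<exists>!y. y \<in> UNIV \<and> y + a = b"
    by (rule ex1I[of _ "b - a"]) auto
qed auto

lemma moufang_loop_add: "moufang_loop UNIV (+) (0::'a::group_add)"
  by (simp add: moufang_loop_def loop_add add.assoc)

lemma moufang_cocycle_biadditive:
  fixes \<beta> :: "'a::plus \<Rightarrow> 'a \<Rightarrow> 'b::ab_group_add"
  assumes "\<And>x y z. \<beta> (x + y) z = \<beta> x z + \<beta> y z" and "\<And>x y z. \<beta> x (y + z) = \<beta> x y + \<beta> x z"
  shows "moufang_cocycle (+) \<beta>"
  by (simp add: moufang_cocycle_def assms algebra_simps)

lemma group_closure_eq_UNIV_bit1:
  assumes "(1 :: 'a::finite bit1) \<in> U"
  shows "group_closure U = UNIV"
proof -
  have "x \<in> group_closure U" for x :: "'a bit1"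
  proof (induct x rule: bit1_induct)
    case (of_int z)
    have "of_nat (nat z) * 1 \<in> group_closure U"
      by (rule group_closure_scalar_mult_left) (simp add: assms group_closure.base)
    with of_int show ?case by simp
  qed
  then show ?thesis by blast
qed

lemma group_closure_Pair_eq_UNIV:
  fixes U :: "('a::finite bit1 \<times> 'b::ab_group_add) set"
  assumes "(1, 0) \<in> U" and "group_closure {t. (0, t) \<in> U} = UNIV"
  shows "group_closure U = UNIV"
proof -
  have left: "(s, 0) \<in> group_closure U" if "s \<in> group_closure {1}" for s
    using that
  proof induction
    case (base s)
    then show ?case using assms(1) by (auto simp: zero_prod_def intro: group_closure.base)
  next
    case (diff s s')
    then show ?case using group_closure.diff[of "(s, 0)" U "(s', 0)"] by simp
  qed
  have right: "(0, t) \<in> group_closure U" if "t \<in> group_closure {t. (0, t) \<in> U}" for t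
    using that
  proof induction
    case (base t)
    then show ?case by (auto simp: zero_prod_def intro: group_closure.base)
  next
    case (diff t t')
    then show ?case using group_closure.diff[of "(0, t)" U "(0, t')"] by simp
  qed
  have "(s, t) \<in> group_closure U" for s t
  proof -
    have "s \<in> group_closure {1}" "t \<in> group_closure {t. (0, t) \<in> U}"
      using assms(2) by (simp_all add: group_closure_eq_UNIV_bit1)
    then show ?thesis using group_closure_add[OF left right] by simp
  qed
  then show ?thesis by (metis UNIV_eq_I prod.collapse)
qed

lemma subloop_gen_add_eq_UNIV:
  fixes S :: "'a::ab_group_add set"
  assumes "S \<noteq> {}" and "group_closure S = UNIV"
  shows "subloop_gen UNIV (+) S = UNIV"
proof -
  have "x \<in> subloop_gen UNIV (+) S" if "x \<in> group_closure S" for x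
    using that
  proof induction
    case (base s)
    obtain x where "x \<in> S" using assms(1) by blast
    then have "x \<in> subloop_gen UNIV (+) S"
      by (rule subloop_gen.gen)
    then have "0 \<in> subloop_gen UNIV (+) S"
      by (rule unit_in_subloop_gen[OF loop_add]) simp
    with base show ?case by (auto intro: subloop_gen.gen)
  next
    case (diff s t)
    have "t + (s - t) = s" by simp
    then show ?case
      by (rule subloop_gen.ldiv[where x=t and y=s, rotated 3]) (use diff.IH in simp_all)
  qed
  then show ?thesis using assms(2) by blast
qed

section \<open>A Moufang loop of order 3^19\<close>

type_synonym vec4 = "27 \<times> 27 \<times> 27 \<times> 27"
type_synonym vec6 = "3 \<times> 3 \<times> 3 \<times> 3 \<times> 3 \<times> 3"
type_synonym grp = "vec4 \<times> vec6"
type_synonym mloop = "grp \<times> 3"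

definition mod3 :: "27 \<Rightarrow> 3" where "mod3 x = of_int (Rep_bit1 x)"

lemma mod3_of_int: "mod3 (of_int k) = of_int k"
proof -
  have "Rep_bit1 (of_int k :: 27) = k mod 27"
    by (simp add: bit1.of_int_eq, rule Abs_bit1_inverse, simp)
  moreover have "(of_int (k mod 27) :: 3) = of_int k"
    by (simp add: bit1.of_int_eq mod_mod_cancel)
  ultimately show ?thesis by (simp add: mod3_def)
qed

lemma mod3_add: "mod3 (x + y) = mod3 x + mod3 y"
  by (induct x rule: bit1_induct, induct y rule: bit1_induct) (metis of_int_add mod3_of_int)

lemma mod3_0 [simp]: "mod3 0 = 0"
  by (metis of_int_0 mod3_of_int)

lemma mod3_1 [simp]: "mod3 1 = 1"
  by (metis of_int_1 mod3_of_int)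

fun grp_cocycle :: "vec4 \<Rightarrow> vec4 \<Rightarrow> vec6" where
  "grp_cocycle (x0, x1, x2, x3) (y0, y1, y2, y3) =
     (mod3 x0 * mod3 y1, mod3 x0 * mod3 y2, mod3 x0 * mod3 y3,
      mod3 x1 * mod3 y2, mod3 x1 * mod3 y3, mod3 x2 * mod3 y3)"

interpretation grp: central_extension "(+)" "0 :: vec4" grp_cocycle
  by unfold_locales (rule loop_add, auto simp: grp_cocycle.simps zero_prod_def)

lemma moufang_loop_grp: "moufang_loop UNIV grp.mult (0, 0)"
  by (rule grp.moufang_loop_ext[OF moufang_loop_add moufang_cocycle_biadditive])
    (auto simp: grp_cocycle.simps mod3_add algebra_simps)

fun loop_cocycle :: "grp \<Rightarrow> grp \<Rightarrow> 3" where
  "loop_cocycle ((a0, a1, a2, a3), (x4, x5, x6, x7, x8, x9)) ((b0, b1, b2, b3), (y4, y5, y6, y7, y8, y9)) = (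
    let x0 = mod3 a0; x1 = mod3 a1; x2 = mod3 a2; x3 = mod3 a3;
      y0 = mod3 b0; y1 = mod3 b1; y2 = mod3 b2; y3 = mod3 b3
    in
      x0 * x1 * x3 * y2 - x0 * x2 * x3 * y1 - x0 * x2 * y8 - x0 * x3 * y7 + x0 * x8 * y2
      + x0 * x9 * y1 + x0 * y1 * y2 * y3 - x0 * y1 * y9 + x0 * y3 * y7 - x1 * x2 * y6
      - x1 * x3 * y5 + x1 * x5 * y3 - x1 * x9 * y0 + x1 * y0 * y9 + x1 * y2 * y6
      + x2 * x3 * y0 * y1 + x2 * x4 * y3 + x2 * x6 * y1 + x2 * y0 * y8 - x2 * y3 * y4
      - x3 * x4 * y2 + x3 * x7 * y0 - x3 * y0 * y1 * y2 + x3 * y1 * y5 + x3 * y2 * y4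
      - x5 * y1 * y3 - x6 * y1 * y2 - x7 * y0 * y3 - x8 * y0 * y2)"

lemma moufang_cocycle_loop_cocycle: "moufang_cocycle grp.mult loop_cocycle"
proof -
  have char_3: "(3 :: 3) = 0" by simp
  show ?thesis
    unfolding moufang_cocycle_def split_paired_All
    by (simp add: loop_cocycle.simps grp_cocycle.simps Let_def mod3_add algebra_simps char_3)
qed

interpretation mloop: central_extension grp.mult "(0, 0)" loop_cocycle
  by unfold_locales (rule grp.loop_ext, auto simp: loop_cocycle.simps zero_prod_def)

lemma moufang_loop_mloop: "moufang_loop UNIV mloop.mult ((0, 0), 0)"
  by (rule mloop.moufang_loop_ext[OF moufang_loop_grp moufang_cocycle_loop_cocycle])

definition gen_a :: mloop where "gen_a = (((1, 0, 0, 0), 0, 0, 0, 0, 0, 0), 0)"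
definition gen_b :: mloop where "gen_b = (((0, 1, 0, 0), 0, 0, 0, 0, 0, 0), 0)"
definition gen_c :: mloop where "gen_c = (((0, 0, 1, 0), 0, 0, 0, 0, 0, 0), 0)"
definition gen_d :: mloop where "gen_d = (((0, 0, 0, 1), 0, 0, 0, 0, 0, 0), 0)"

lemmas gen_defs = gen_a_def gen_b_def gen_c_def gen_d_def

lemma generators_associate:
  "loop_assoc UNIV mloop.mult gen_a gen_b gen_c = ((0, 0), 0)"
  "loop_assoc UNIV mloop.mult gen_a gen_b gen_d = ((0, 0), 0)"
  "loop_assoc UNIV mloop.mult gen_a gen_c gen_d = ((0, 0), 0)"
  "loop_assoc UNIV mloop.mult gen_b gen_c gen_d = ((0, 0), 0)"
  by (rule loop_assoc_eqI[OF mloop.loop_ext];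
      simp add: gen_defs grp_cocycle.simps loop_cocycle.simps zero_prod_def)+

lemma loop_comm_gen_a_gen_b:
  "loop_comm UNIV mloop.mult gen_a gen_b = ((0, (1, 0, 0, 0, 0, 0)), 0)"
  by (rule loop_comm_eqI[OF mloop.loop_ext])
    (simp_all add: gen_defs grp_cocycle.simps loop_cocycle.simps zero_prod_def)

lemma loop_assoc_comm_gen_c_gen_d:
  "loop_assoc UNIV mloop.mult ((0, (1, 0, 0, 0, 0, 0)), 0) gen_c gen_d = ((0, 0), 1)"
  by (rule loop_assoc_eqI[OF mloop.loop_ext])
    (simp_all add: gen_defs grp_cocycle.simps loop_cocycle.simps zero_prod_def)

lemma subloop_gen_grp: "subloop_gen UNIV grp.mult (fst ` {gen_a, gen_b, gen_c, gen_d}) = UNIV"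
proof -
  let ?L = "subloop_gen UNIV grp.mult (fst ` {gen_a, gen_b, gen_c, gen_d})"
  have comm: "(0, c) \<in> ?L"
    if "x \<in> {gen_a, gen_b, gen_c, gen_d}" "y \<in> {gen_a, gen_b, gen_c, gen_d}"
      and "grp.mult (fst x) (fst y) = grp.mult (grp.mult (fst y) (fst x)) (0, c)" for x y c
  proof (rule comm_in_subloop_gen)
    show "fst x \<in> ?L" "fst y \<in> ?L"
      using that(1,2) by (auto intro: subloop_gen.gen)
  qed (use that(3) in simp_all)
  have "(0, (1, 0, 0, 0, 0, 0)) \<in> ?L" "(0, (0, 1, 0, 0, 0, 0)) \<in> ?L" "(0, (0, 0, 1, 0, 0, 0)) \<in> ?L"
    "(0, (0, 0, 0, 1, 0, 0)) \<in> ?L" "(0, (0, 0, 0, 0, 1, 0)) \<in> ?L" "(0, (0, 0, 0, 0, 0, 1)) \<in> ?L"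
    by (rule comm[of gen_a gen_b] comm[of gen_a gen_c] comm[of gen_a gen_d]
        comm[of gen_b gen_c] comm[of gen_b gen_d] comm[of gen_c gen_d];
        simp add: gen_defs zero_prod_def)+
  then have "group_closure {t. (0, t) \<in> ?L} = UNIV"
    by (intro group_closure_Pair_eq_UNIV group_closure_eq_UNIV_bit1) (simp_all add: zero_prod_def)
  moreover have "subloop_gen UNIV (+) (fst ` fst ` {gen_a, gen_b, gen_c, gen_d}) = UNIV"
    by (intro subloop_gen_add_eq_UNIV group_closure_Pair_eq_UNIV group_closure_eq_UNIV_bit1)
      (simp_all add: gen_defs zero_prod_def)
  ultimately show ?thesis
    by (intro grp.subloop_gen_eq_UNIV[where T="{t. (0, t) \<in> ?L}"]) auto
qed

lemma subloop_gen_mloop: "subloop_gen UNIV mloop.mult {gen_a, gen_b, gen_c, gen_d} = UNIV"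
proof (rule mloop.subloop_gen_eq_UNIV[OF subloop_gen_grp])
  let ?L = "subloop_gen UNIV mloop.mult {gen_a, gen_b, gen_c, gen_d}"
  have gens: "gen_a \<in> ?L" "gen_b \<in> ?L" "gen_c \<in> ?L" "gen_d \<in> ?L"
    by (simp_all add: subloop_gen.gen)
  have "((0, (1, 0, 0, 0, 0, 0)), 0) \<in> ?L"
    by (rule comm_in_subloop_gen[OF gens(1,2)]) (simp_all add: gen_defs zero_prod_def)
  then have "((0, 0), 1) \<in> ?L"
    by (rule assoc_in_subloop_gen[OF _ gens(3,4)]) (simp_all add: gen_defs zero_prod_def)
  then show "\<forall>t\<in>{1}. ((0, 0), t) \<in> ?L" by simp
qed (rule group_closure_eq_UNIV_bit1, simp)

theorem mainTheorem2:
  shows "\<exists>(M :: nat set) (mult :: nat \<Rightarrow> nat \<Rightarrow> nat) e a b c d.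
    moufang_loop M mult e \<and> card M = 3 ^ 19 \<and>
    a \<in> M \<and> b \<in> M \<and> c \<in> M \<and> d \<in> M \<and>
    subloop_gen M mult {a, b, c, d} = M \<and>
    loop_assoc M mult a b c = e \<and> loop_assoc M mult a b d = e \<and>
    loop_assoc M mult a c d = e \<and> loop_assoc M mult b c d = e \<and>
    loop_assoc M mult (loop_comm M mult a b) c d \<noteq> e"
proof -
  obtain h :: "mloop \<Rightarrow> nat" where h: "inj h"
    using finite_imp_inj_to_nat_seg[of "UNIV :: mloop set"] by auto
  have card: "card (range h) = 3 ^ 19"
    using card_image[OF h] by simp
  have nontrivial: "h ((0, 0), 1) \<noteq> h ((0, 0), 0)"
    using h by (simp add: inj_eq)
  note transport = moufang_loop_transport[OF h moufang_loop_mloop]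
    subloop_gen_transport[OF h subloop_gen_mloop, simplified]
    loop_assoc_transport[OF h mloop.loop_ext] loop_comm_transport[OF h mloop.loop_ext]
  show ?thesis
    by (rule exI[of _ "range h"], rule exI[of _ "transport_mult h mloop.mult"],
        rule exI[of _ "h ((0, 0), 0)"], rule exI[of _ "h gen_a"], rule exI[of _ "h gen_b"],
        rule exI[of _ "h gen_c"], rule exI[of _ "h gen_d"])
      (simp add: card nontrivial transport generators_associate loop_comm_gen_a_gen_b
        loop_assoc_comm_gen_c_gen_d)
qed

end
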